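(* There is a subexponential-time non-adaptive tester for submodularity of functions $f:\{0,1\}^n\to\mathbb{R}$: the procedure samples $1/\epsilon^{O(\sqrt{n}\log n)}$ squares uniformly at random and answers NO if and only if some sampled square is violated. It always answers YES on submodular functions, and if the input $f$ is $\epsilon$-far from being submodular, it answers NO with probability greater than $2/3$.
   Context: Let $\mathbf{e}_i \in \{0,1\}^n$ be the $i$-th standard basis vector. For $f:\{0,1\}^n\to\mathbb{R}$, $i\in[n]$ and $x$ with $x_i=0$, let $\partial_i f(x) = f(x+\mathbf{e}_i)-f(x)$. $f$ is submodular if $\partial_i f(x) \ge \partial_i f(y)$ for all $i$ and all $x \le y$ (coordinatewise) with $x_i=y_i=0$. $f$ is $\epsilon$-far from being submodular if every submodular $g$ differs from $f$ on more than an $\epsilon$ fraction of the points of $\{0,1\}^n$. A square is a set $\{x, x+\mathbf{e}_i, x+\mathbf{e}_j, x+\mathbf{e}_i+\mathbf{e}_j\}$ with $i\neq j$, $x_i=x_j=0$; a uniformly random square is obtained by sampling $x$ uniformly from $\{0,1\}^n$ and $i,j$ uniformly among the coordinates where $x$ is $0$. It is violated if $f(x)+f(x+\mathbf{e}_i+\mathbf{e}_j) > f(x+\mathbf{e}_i)+f(x+\mathbf{e}_j)$. A tester is non-adaptive if its queries do not depend on previously observed function values. *)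

theory Defs
  imports "HOL-Probability.Probability"
begin

text \<open>Points of the cube {0,1}^n are represented as subsets of {..<n}
  (coordinate i is 1 iff i is in the set); the coordinatewise order is inclusion.
  A function f on the cube is a function nat set => real, of which only the
  values on Pow {..<n} matter.\<close>

definition submodular :: "nat \<Rightarrow> (nat set \<Rightarrow> real) \<Rightarrow> bool" where
  "submodular n f \<longleftrightarrow>
     (\<forall>i x y. i < n \<longrightarrow> x \<subseteq> y \<longrightarrow> y \<subseteq> {..<n} \<longrightarrow> i \<notin> y \<longrightarrow>
        f (insert i x) - f x \<ge> f (insert i y) - f y)"

definition eps_far_submodular :: "nat \<Rightarrow> real \<Rightarrow> (nat set \<Rightarrow> real) \<Rightarrow> bool" where
  "eps_far_submodular n \<epsilon> f \<longleftrightarrow>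
     (\<forall>g. submodular n g \<longrightarrow>
        real (card {x \<in> Pow {..<n}. f x \<noteq> g x}) > \<epsilon> * 2 ^ n)"

text \<open>A square is given by (x, i, j) with i \<noteq> j both zero coordinates of x.\<close>

definition random_square :: "nat \<Rightarrow> (nat set \<times> nat \<times> nat) option pmf" where
  "random_square n =
     bind_pmf (pmf_of_set (Pow {..<n})) (\<lambda>x.
       if card ({..<n} - x) \<ge> 2 then
         map_pmf (\<lambda>(i, j). Some (x, i, j))
           (pmf_of_set {(i, j). i \<in> {..<n} - x \<and> j \<in> {..<n} - x \<and> i \<noteq> j})
       else return_pmf None)"

fun square_violated :: "(nat set \<Rightarrow> real) \<Rightarrow> (nat set \<times> nat \<times> nat) option \<Rightarrow> bool" where
  "square_violated f None = False"
| "square_violated f (Some (x, i, j)) =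
     (f x + f (insert i (insert j x)) > f (insert i x) + f (insert j x))"

definition tester_rejects_prob :: "nat \<Rightarrow> nat \<Rightarrow> (nat set \<Rightarrow> real) \<Rightarrow> real" where
  "tester_rejects_prob n m f =
     measure_pmf.prob (Pi_pmf {..<m} None (\<lambda>_. random_square n))
       {s. \<exists>k<m. square_violated f (s k)}"

end

theory Submission
  imports Defs
begin

text \<open>A function without violated squares is submodular. Conversely, a function can be
  repaired at a level a: keep f on the levels a and a + 1, put a steep concave parabola below,
  and on each higher level take the largest value not exceeding f that satisfies all squares
  with that top vertex. The result is submodular and differs from f only outside a band of
  levels a..b or at points lying at most b - a above the top of a violated square. So if f is
  \<epsilon>-far, the violated squares number at least (\<epsilon> 2^n - #points outside the band) / (n + 1)^(b - a).
  A band of width O(\<surd>(n ln (1/\<epsilon>))) around n/2 (Hoeffding), or for \<epsilon> near 1 a narrow band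
  above the middle level, makes violated squares a fraction \<epsilon>^O(\<surd>n ln n) of all squares, and
  (1/\<epsilon>)^O(\<surd>n ln n) samples then hit one with probability more than 2/3.\<close>

section \<open>Squares\<close>

definition ordered_pairs :: "'a set \<Rightarrow> ('a \<times> 'a) set" where
  "ordered_pairs A = {(i, j). i \<in> A \<and> j \<in> A \<and> i \<noteq> j}"

lemma finite_ordered_pairs: "finite A \<Longrightarrow> finite (ordered_pairs A)"
  unfolding ordered_pairs_def by (rule finite_subset[of _ "A \<times> A"]) auto

lemma ordered_pairs_nonempty:
  assumes "2 \<le> card A"
  shows "ordered_pairs A \<noteq> {}"
proof -
  obtain i where i: "i \<in> A"
    using assms by fastforce
  then have "card (A - {i}) \<ge> 1"
    using assms by (simp add: card_Diff_singleton)
  then obtain j where "j \<in> A - {i}"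
    by (metis card.empty ex_in_conv not_one_le_zero)
  then show ?thesis using i unfolding ordered_pairs_def by blast
qed

definition squares :: "nat \<Rightarrow> (nat set \<times> nat \<times> nat) set" where
  "squares n = {(x, i, j). x \<subseteq> {..<n} \<and> (i, j) \<in> ordered_pairs ({..<n} - x)}"

definition violated_squares :: "nat \<Rightarrow> (nat set \<Rightarrow> real) \<Rightarrow> (nat set \<times> nat \<times> nat) set" where
  "violated_squares n f = {s \<in> squares n. square_violated f (Some s)}"

lemma mem_squares:
  "(x, i, j) \<in> squares n \<longleftrightarrow>
     x \<subseteq> {..<n} \<and> i < n \<and> j < n \<and> i \<notin> x \<and> j \<notin> x \<and> i \<noteq> j"
  by (auto simp: squares_def ordered_pairs_def)

lemma finite_squares: "finite (squares n)"
  by (rule finite_subset[of _ "Pow {..<n} \<times> {..<n} \<times> {..<n}"]) (auto simp: mem_squares)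

lemma finite_violated_squares: "finite (violated_squares n f)"
  unfolding violated_squares_def using finite_squares by simp

lemma squares_le_1: "n \<le> 1 \<Longrightarrow> squares n = {}"
  by (auto simp: mem_squares)

lemma submodular_if_squares:
  assumes sq: "\<And>x i j. (x, i, j) \<in> squares n \<Longrightarrow>
     g x + g (insert i (insert j x)) \<le> g (insert i x) + g (insert j x)"
  shows "submodular n g"
  unfolding submodular_def
proof (intro allI impI)
  fix i x y assume i: "i < n" and xy: "x \<subseteq> y" and y: "y \<subseteq> {..<n}" and iy: "i \<notin> y"
  have chain: "g (insert i (x \<union> D)) - g (x \<union> D) \<le> g (insert i x) - g x"
    if "finite D" "D \<subseteq> y - x" for D
    using that
  proof (induction D rule: finite_induct)
    case (insert j D)
    let ?z = "x \<union> D"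
    have "(?z, i, j) \<in> squares n"
      using insert i y iy xy by (auto simp: mem_squares)
    then have "g ?z + g (insert i (insert j ?z)) \<le> g (insert i ?z) + g (insert j ?z)"
      by (rule sq)
    with insert show ?case by (simp add: insert_commute)
  qed simp
  have "finite (y - x)" using y finite_subset by blast
  with chain have "g (insert i (x \<union> (y - x))) - g (x \<union> (y - x)) \<le> g (insert i x) - g x"
    by blast
  then show "g (insert i y) - g y \<le> g (insert i x) - g x"
    using xy by (simp add: Un_absorb1)
qed

lemma submodular_le_1: "n \<le> 1 \<Longrightarrow> submodular n f"
  by (rule submodular_if_squares) (simp add: squares_le_1)

lemma violated_squares_submodular:
  assumes "submodular n f"
  shows "violated_squares n f = {}"
proof -
  have "\<not> square_violated f (Some (x, i, j))" if "(x, i, j) \<in> squares n" for x i j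
  proof -
    have "x \<subseteq> insert j x" "insert j x \<subseteq> {..<n}" "i < n" "i \<notin> insert j x"
      using that by (auto simp: mem_squares)
    then have "f (insert i (insert j x)) - f (insert j x) \<le> f (insert i x) - f x"
      using assms unfolding submodular_def by blast
    then show ?thesis by (simp add: insert_commute)
  qed
  then show ?thesis unfolding violated_squares_def by auto
qed

section \<open>Repairing a function\<close>

text \<open>Step Suc k fixes level a + 2 + k: the value there is the largest one not exceeding f
  that satisfies every square with that top vertex. Only the values up to level a + 1 + k of
  repair_upto a f M k are final, hence the choice of k in repair.\<close>

primrec repair_upto :: "nat \<Rightarrow> (nat set \<Rightarrow> real) \<Rightarrow> real \<Rightarrow> nat \<Rightarrow> nat set \<Rightarrow> real" where
  "repair_upto a f M 0 z = (if card z < a then - M * (real a - real (card z))^2 else f z)"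
| "repair_upto a f M (Suc k) z =
    (if card z = a + 2 + k then
       min (f z) (Min ((\<lambda>(i, j). repair_upto a f M k (z - {i}) + repair_upto a f M k (z - {j})
                                  - repair_upto a f M k (z - {i, j})) ` ordered_pairs z))
     else repair_upto a f M k z)"

definition repair :: "nat \<Rightarrow> (nat set \<Rightarrow> real) \<Rightarrow> real \<Rightarrow> nat set \<Rightarrow> real" where
  "repair a f M z = repair_upto a f M (card z - (a + 1)) z"

lemma repair_upto_stable:
  assumes "card z < a + 2 + k"
  shows "repair_upto a f M k z = repair a f M z"
proof -
  have "repair_upto a f M (k' + d) z = repair_upto a f M k' z" if "card z < a + 2 + k'" for k' d
    using that by (induction d) auto
  moreover have "k = (card z - (a + 1)) + (k - (card z - (a + 1)))" "card z < a + 2 + (card z - (a + 1))"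
    using assms by linarith+
  ultimately show ?thesis unfolding repair_def by metis
qed

lemma repair_below: "card z < a \<Longrightarrow> repair a f M z = - M * (real a - real (card z))^2"
  unfolding repair_def by simp

lemma repair_level: "a \<le> card z \<Longrightarrow> card z \<le> a + 1 \<Longrightarrow> repair a f M z = f z"
  unfolding repair_def by simp

lemma repair_above:
  assumes "a + 2 \<le> card z"
  shows "repair a f M z = min (f z) (Min ((\<lambda>(i, j). repair a f M (z - {i}) + repair a f M (z - {j})
                                             - repair a f M (z - {i, j})) ` ordered_pairs z))"
proof -
  define k where "k = card z - (a + 2)"
  have ck: "card z = a + 2 + k" and fin: "finite z"
    using assms card.infinite by (fastforce simp: k_def)+
  have "repair_upto a f M k (z - {i}) + repair_upto a f M k (z - {j}) - repair_upto a f M k (z - {i, j})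
      = repair a f M (z - {i}) + repair a f M (z - {j}) - repair a f M (z - {i, j})"
    if "(i, j) \<in> ordered_pairs z" for i j
  proof -
    have "card (z - {i}) < a + 2 + k" "card (z - {j}) < a + 2 + k" "card (z - {i, j}) < a + 2 + k"
      using that fin ck by (auto simp: ordered_pairs_def card_Diff_subset)
    then show ?thesis by (simp add: repair_upto_stable)
  qed
  then have "(\<lambda>(i, j). repair_upto a f M k (z - {i}) + repair_upto a f M k (z - {j})
                       - repair_upto a f M k (z - {i, j})) ` ordered_pairs z
      = (\<lambda>(i, j). repair a f M (z - {i}) + repair a f M (z - {j})
                       - repair a f M (z - {i, j})) ` ordered_pairs z"
    by (intro image_cong) auto
  moreover have "card z - (a + 1) = Suc k" using ck by simp
  ultimately show ?thesis
    unfolding repair_def using ck by simp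
qed

lemma repair_le: "a \<le> card z \<Longrightarrow> repair a f M z \<le> f z"
  by (cases "card z \<le> a + 1") (simp_all add: repair_level repair_above)

lemma repair_square_above:
  assumes "finite x" "a \<le> card x" "i \<notin> x" "j \<notin> x" "i \<noteq> j"
  shows "repair a f M x + repair a f M (insert i (insert j x))
           \<le> repair a f M (insert i x) + repair a f M (insert j x)"
proof -
  let ?z = "insert i (insert j x)"
  have ij: "(i, j) \<in> ordered_pairs ?z" and "finite ?z" and "a + 2 \<le> card ?z"
    using assms by (auto simp: ordered_pairs_def)
  then have "repair a f M ?z \<le> repair a f M (?z - {i}) + repair a f M (?z - {j}) - repair a f M (?z - {i, j})"
    by (auto simp: repair_above intro!: Min_le finite_ordered_pairs min.coboundedI2 rev_image_eqI[OF ij])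
  moreover have "?z - {i} = insert j x" "?z - {j} = insert i x" "?z - {i, j} = x"
    using assms by auto
  ultimately show ?thesis by simp
qed

text \<open>Below level a the parabola is steep enough to beat any values of f with |f| \<le> M / 3.\<close>

lemma repair_square_below:
  assumes f: "\<And>z. z \<subseteq> {..<n} \<Longrightarrow> 3 * \<bar>f z\<bar> \<le> M"
    and sq: "(x, i, j) \<in> squares n" and a: "card x < a"
  shows "repair a f M x + repair a f M (insert i (insert j x))
           \<le> repair a f M (insert i x) + repair a f M (insert j x)"
proof -
  let ?z = "insert i (insert j x)"
  have fx: "finite x" and x: "x \<subseteq> {..<n}" and sub: "?z \<subseteq> {..<n}" "insert i x \<subseteq> {..<n}" "insert j x \<subseteq> {..<n}"
    using sq finite_subset by (auto simp: mem_squares)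
  then have cz: "card ?z = card x + 2" "card (insert i x) = card x + 1" "card (insert j x) = card x + 1"
    using sq by (auto simp: mem_squares)
  have M: "0 \<le> M" using f[OF x] by linarith
  define k where "k = real a - real (card x)"
  have "k \<ge> 1" using a by (simp add: k_def)
  have rx: "repair a f M x = - M * k^2"
    using a by (simp add: repair_below k_def)
  consider "card x + 1 = a" | "card x + 2 = a" | "card x + 3 \<le> a" using a by linarith
  then show ?thesis
  proof cases
    case 1
    then have "k = 1" by (simp add: k_def)
    with 1 show ?thesis
      using rx f[OF sub(1)] f[OF sub(2)] f[OF sub(3)] cz by (simp add: repair_level)
  next
    case 2
    then have "k = 2" by (simp add: k_def)
    moreover have "repair a f M (insert i x) = - M * (k - 1)^2" "repair a f M (insert j x) = - M * (k - 1)^2"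
      using 2 cz by (simp_all add: repair_below k_def)
    ultimately show ?thesis
      using 2 rx f[OF sub(1)] M cz by (simp add: repair_level)
  next
    case 3
    have "repair a f M ?z = - M * (k - 2)^2"
      "repair a f M (insert i x) = - M * (k - 1)^2" "repair a f M (insert j x) = - M * (k - 1)^2"
      using 3 cz by (simp_all add: repair_below k_def algebra_simps)
    moreover have "- M * k^2 + - M * (k - 2)^2 = - M * (k - 1)^2 + - M * (k - 1)^2 - 2 * M"
      by (simp add: power2_eq_square algebra_simps)
    ultimately show ?thesis
      using rx M by simp
  qed
qed

lemma repair_submodular:
  assumes "\<And>z. z \<subseteq> {..<n} \<Longrightarrow> 3 * \<bar>f z\<bar> \<le> M"
  shows "submodular n (repair a f M)"
proof (rule submodular_if_squares)
  fix x i j assume sq: "(x, i, j) \<in> squares n"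
  show "repair a f M x + repair a f M (insert i (insert j x))
          \<le> repair a f M (insert i x) + repair a f M (insert j x)"
  proof (cases "a \<le> card x")
    case True
    with sq show ?thesis
      by (intro repair_square_above) (auto simp: mem_squares intro: finite_subset)
  next
    case False
    with assms sq show ?thesis by (intro repair_square_below) auto
  qed
qed

text \<open>Descend from z: either a lower neighbour of z was already changed by the repair, or
  the pair attaining the minimum in repair_above spans a square violated by f itself.\<close>

lemma repair_lt_imp_violated_square:
  assumes "z \<subseteq> {..<n}" "a + 2 \<le> card z" "repair a f M z < f z"
  shows "\<exists>x i j. (x, i, j) \<in> violated_squares n f \<and> a \<le> card x \<and> insert i (insert j x) \<subseteq> z"
  using assms
proof (induction "card z" arbitrary: z rule: less_induct)
  case less
  have fz: "finite z" using less.prems finite_subset by blast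
  let ?F = "\<lambda>(i, j). repair a f M (z - {i}) + repair a f M (z - {j}) - repair a f M (z - {i, j})"
  have "Min (?F ` ordered_pairs z) < f z"
    using less.prems repair_above[of a z f M] by linarith
  then obtain i j where ij: "(i, j) \<in> ordered_pairs z" "?F (i, j) < f z"
    using finite_ordered_pairs[OF fz] ordered_pairs_nonempty[of z] less.prems
    by (auto simp: Min_less_iff)
  define x where "x = z - {i, j}"
  have z: "z = insert i (insert j x)" "z - {i} = insert j x" "z - {j} = insert i x" "z - {i, j} = x"
    and ijx: "i \<notin> x" "j \<notin> x" "i \<noteq> j"
    using ij(1) by (auto simp: x_def ordered_pairs_def)
  have card: "card (insert i x) + 1 = card z" "card (insert j x) + 1 = card z" "card x + 2 = card z"
    using fz ijx unfolding z(1) by auto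
  show ?case
  proof (cases "\<exists>y \<in> {insert i x, insert j x}. repair a f M y < f y")
    case True
    then obtain y where y: "y \<in> {insert i x, insert j x}" "repair a f M y < f y" by blast
    have y_sub: "y \<subseteq> z" using y(1) z(1) by blast
    have y_card: "card y + 1 = card z" using y(1) card by blast
    have "card y \<noteq> a + 1" using y(2) repair_level[of a y f M] by auto
    then have "a + 2 \<le> card y" using y_card less.prems(2) by linarith
    moreover have "card y < card z" "y \<subseteq> {..<n}" using y_card y_sub less.prems(1) by auto
    ultimately obtain x' i' j' where "(x', i', j') \<in> violated_squares n f" "a \<le> card x'"
      "insert i' (insert j' x') \<subseteq> y"
      using less.hyps y(2) by blast
    with y_sub show ?thesis by blast
  next
    case False
    then have "f (insert i x) \<le> repair a f M (insert i x)" "f (insert j x) \<le> repair a f M (insert j x)"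
      by auto
    moreover have "repair a f M x \<le> f x" using card less.prems(2) by (intro repair_le) linarith
    ultimately have "square_violated f (Some (x, i, j))"
      using ij(2) z by simp
    moreover have "(x, i, j) \<in> squares n"
      using less.prems(1) ijx unfolding z(1) by (auto simp: mem_squares)
    moreover have "a \<le> card x" using card less.prems(2) by linarith
    ultimately show ?thesis
      unfolding violated_squares_def using z(1) by blast
  qed
qed

section \<open>Counting points of the cube\<close>

lemma card_subsets_card:
  "card {z \<in> Pow {..<n}. P (card z)} = (\<Sum>k | k \<le> n \<and> P k. n choose k)"
proof -
  have "{z \<in> Pow {..<n}. P (card z)} = (\<Union>k \<in> {k. k \<le> n \<and> P k}. {z. z \<subseteq> {..<n} \<and> card z = k})"
    using card_mono[of "{..<n}"] by auto
  moreover have "card (\<Union>k \<in> {k. k \<le> n \<and> P k}. {z. z \<subseteq> {..<n} \<and> card z = k})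
      = (\<Sum>k | k \<le> n \<and> P k. card {z. z \<subseteq> {..<n} \<and> card z = k})"
    by (rule card_UN_disjoint) (auto intro: finite_subset[of _ "Pow {..<n}"])
  ultimately show ?thesis
    by (simp add: n_subsets)
qed

lemma card_subsets_not:
  "real (card {z \<in> Pow {..<n}. \<not> P z}) = 2 ^ n - real (card {z \<in> Pow {..<n}. P z})"
proof -
  have "card {z \<in> Pow {..<n}. P z} + card {z \<in> Pow {..<n}. \<not> P z} = card (Pow {..<n} :: nat set set)"
    by (subst card_Un_disjoint[symmetric]) (auto intro: arg_cong[where f = card])
  then have "real (card {z \<in> Pow {..<n}. P z} + card {z \<in> Pow {..<n}. \<not> P z}) = 2 ^ n"
    by (simp add: card_Pow)
  then show ?thesis by linarith
qed

lemma sum_power_le_Suc_power: "(\<Sum>k\<le>w. (n::nat) ^ k) \<le> (n + 1) ^ w"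
proof (induction w)
  case (Suc w)
  have "(\<Sum>k\<le>Suc w. n ^ k) \<le> (n + 1) ^ w + n * (n + 1) ^ w"
    using Suc by (simp add: power_mono add_mono)
  then show ?case by simp
qed simp

lemma card_subsets_card_le: "card {S \<in> Pow {..<n}. card S \<le> w} \<le> (n + 1) ^ w"
proof -
  have "card {S \<in> Pow {..<n}. card S \<le> w} = (\<Sum>k | k \<le> n \<and> k \<le> w. n choose k)"
    by (rule card_subsets_card)
  also have "\<dots> \<le> (\<Sum>k | k \<le> n \<and> k \<le> w. n ^ k)"
    by (intro sum_mono binomial_le_pow) auto
  also have "\<dots> \<le> (\<Sum>k\<le>w. n ^ k)"
    by (intro sum_mono2) auto
  also have "\<dots> \<le> (n + 1) ^ w" by (rule sum_power_le_Suc_power)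
  finally show ?thesis .
qed

section \<open>Distance to submodular functions\<close>

lemma repair_differs_near_violated_square:
  assumes z: "z \<subseteq> {..<n}" "a \<le> card z" "card z \<le> b" and ne: "repair a f M z \<noteq> f z"
  shows "\<exists>x i j S. (x, i, j) \<in> violated_squares n f \<and> S \<subseteq> {..<n} \<and> card S \<le> b - a \<and>
           z = insert i (insert j x) \<union> S"
proof -
  have fz: "finite z" using z(1) finite_subset by blast
  have "card z \<noteq> a" "card z \<noteq> a + 1" using ne repair_level[of a z f M] by auto
  then have "a + 2 \<le> card z" using z by linarith
  moreover have "repair a f M z < f z" using ne repair_le[of a z f M] z(2) by linarith
  ultimately obtain x i j where v: "(x, i, j) \<in> violated_squares n f" "a \<le> card x"
    "insert i (insert j x) \<subseteq> z"
    using repair_lt_imp_violated_square[OF z(1)] by blast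
  let ?t = "insert i (insert j x)"
  have ft: "finite ?t" using finite_subset[OF v(3) fz] .
  then have "card x \<le> card ?t" by (intro card_mono) auto
  then have "card (z - ?t) \<le> b - a"
    using v(2) z(3) by (simp add: card_Diff_subset[OF ft v(3)])
  moreover have "z = ?t \<union> (z - ?t)" using v(3) by auto
  ultimately show ?thesis using v(1) z(1) by blast
qed

lemma exists_submodular_close:
  "\<exists>g. submodular n g \<and> (\<forall>z. card z = a \<longrightarrow> g z = f z) \<and>
       card {z \<in> Pow {..<n}. f z \<noteq> g z}
         \<le> card {z \<in> Pow {..<n}. card z < a \<or> b < card z} + card (violated_squares n f) * (n + 1) ^ (b - a)"
proof -
  define M where "M = 3 * (\<Sum>z\<in>Pow {..<n}. \<bar>f z\<bar>)"
  have M: "3 * \<bar>f z\<bar> \<le> M" if "z \<subseteq> {..<n}" for z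
    unfolding M_def using that by (auto intro: member_le_sum)
  define g where "g = repair a f M"
  define top :: "nat set \<times> nat \<times> nat \<Rightarrow> nat set" where "top = (\<lambda>(x, i, j). insert i (insert j x))"
  define Out where "Out = {z \<in> Pow {..<n}. card z < a \<or> b < card z}"
  define K where "K = {S \<in> Pow {..<n}. card S \<le> b - a}"
  define U where "U = (\<Union>s \<in> violated_squares n f. (\<lambda>S. top s \<union> S) ` K)"
  have "{z \<in> Pow {..<n}. f z \<noteq> g z} \<subseteq> Out \<union> U"
  proof
    fix z assume z: "z \<in> {z \<in> Pow {..<n}. f z \<noteq> g z}"
    show "z \<in> Out \<union> U"
    proof (cases "z \<in> Out")
      case False
      then obtain x i j S where "(x, i, j) \<in> violated_squares n f" "S \<in> K" "z = top (x, i, j) \<union> S"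
        using repair_differs_near_violated_square[of z n a b f M] z
        by (fastforce simp: Out_def g_def top_def K_def)
      then show ?thesis unfolding U_def by blast
    qed simp
  qed
  moreover have "finite (Out \<union> U)"
    unfolding Out_def U_def K_def using finite_violated_squares by auto
  ultimately have "card {z \<in> Pow {..<n}. f z \<noteq> g z} \<le> card (Out \<union> U)"
    by (rule card_mono[rotated])
  moreover have "card (Out \<union> U) \<le> card Out + card U" by (rule card_Un_le)
  moreover have "card U \<le> (\<Sum>s \<in> violated_squares n f. card ((\<lambda>S. top s \<union> S) ` K))"
    unfolding U_def by (rule card_UN_le[OF finite_violated_squares])
  moreover have "\<dots> \<le> (\<Sum>s \<in> violated_squares n f. card K)"
    by (intro sum_mono card_image_le) (simp add: K_def)
  moreover have "card K \<le> (n + 1) ^ (b - a)"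
    unfolding K_def by (rule card_subsets_card_le)
  then have "(\<Sum>s \<in> violated_squares n f. card K) \<le> card (violated_squares n f) * (n + 1) ^ (b - a)"
    by simp
  ultimately have "card {z \<in> Pow {..<n}. f z \<noteq> g z}
      \<le> card Out + card (violated_squares n f) * (n + 1) ^ (b - a)"
    by linarith
  moreover have "submodular n g" unfolding g_def using M by (rule repair_submodular)
  moreover have "\<forall>z. card z = a \<longrightarrow> g z = f z" by (simp add: g_def repair_level)
  ultimately show ?thesis unfolding Out_def by blast
qed

lemma eps_far_card_bound:
  assumes "eps_far_submodular n \<epsilon> f"
  shows "\<epsilon> * 2 ^ n < card {z \<in> Pow {..<n}. card z < a \<or> b < card z}
                      + card (violated_squares n f) * (real n + 1) ^ (b - a)"
proof -
  obtain g where "submodular n g" and g: "card {z \<in> Pow {..<n}. f z \<noteq> g z}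
      \<le> card {z \<in> Pow {..<n}. card z < a \<or> b < card z} + card (violated_squares n f) * (n + 1) ^ (b - a)"
    using exists_submodular_close by blast
  with assms have "\<epsilon> * 2 ^ n < card {z \<in> Pow {..<n}. f z \<noteq> g z}"
    unfolding eps_far_submodular_def by blast
  moreover from g have "real (card {z \<in> Pow {..<n}. f z \<noteq> g z})
      \<le> real (card {z \<in> Pow {..<n}. card z < a \<or> b < card z} + card (violated_squares n f) * (n + 1) ^ (b - a))"
    by (simp only: of_nat_le_iff)
  ultimately show ?thesis by (simp add: add.commute)
qed

lemma eps_far_level_bound:
  assumes "eps_far_submodular n \<epsilon> f"
  shows "\<epsilon> * 2 ^ n + (n choose a) < 2 ^ n"
proof -
  obtain g where "submodular n g" and g: "\<forall>z. card z = a \<longrightarrow> g z = f z"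
    using exists_submodular_close by blast
  with assms have "\<epsilon> * 2 ^ n < card {z \<in> Pow {..<n}. f z \<noteq> g z}"
    unfolding eps_far_submodular_def by blast
  also have "\<dots> \<le> card {z \<in> Pow {..<n}. \<not> card z = a}"
    using g by (intro of_nat_mono card_mono) auto
  also have "\<dots> = 2 ^ n - real (card {z \<in> Pow {..<n}. card z = a})"
    by (rule card_subsets_not)
  also have "card {z \<in> Pow {..<n}. card z = a} = (\<Sum>k | k \<le> n \<and> k = a. n choose k)"
    by (rule card_subsets_card)
  also have "\<dots> = n choose a"
  proof (cases "a \<le> n")
    case True
    then have "{k. k \<le> n \<and> k = a} = {a}" by auto
    then show ?thesis by simp
  next
    case False
    then have "{k. k \<le> n \<and> k = a} = {}" by auto
    then show ?thesis using False by (simp only:) simp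
  qed
  finally show ?thesis by simp
qed

section \<open>Random squares\<close>

lemma random_square_ordered_pairs:
  "random_square n =
     bind_pmf (pmf_of_set (Pow {..<n})) (\<lambda>x.
       if 2 \<le> card ({..<n} - x)
       then map_pmf (\<lambda>(i, j). Some (x, i, j)) (pmf_of_set (ordered_pairs ({..<n} - x)))
       else return_pmf None)"
  unfolding random_square_def ordered_pairs_def ..

lemma set_pmf_random_square: "set_pmf (random_square n) \<subseteq> insert None (Some ` squares n)"
proof
  fix s assume "s \<in> set_pmf (random_square n)"
  then obtain x where x: "x \<subseteq> {..<n}" and s: "s \<in> set_pmf (if 2 \<le> card ({..<n} - x)
       then map_pmf (\<lambda>(i, j). Some (x, i, j)) (pmf_of_set (ordered_pairs ({..<n} - x)))
       else return_pmf None)"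
    by (auto simp: random_square_ordered_pairs Pow_not_empty)
  show "s \<in> insert None (Some ` squares n)"
  proof (cases "2 \<le> card ({..<n} - x)")
    case True
    then have "set_pmf (pmf_of_set (ordered_pairs ({..<n} - x))) = ordered_pairs ({..<n} - x)"
      by (intro set_pmf_of_set ordered_pairs_nonempty finite_ordered_pairs) auto
    with s True x show ?thesis by (auto simp: squares_def)
  qed (use s in simp)
qed

lemma pmf_random_square_ge:
  assumes s: "s \<in> squares n"
  shows "1 / (2 ^ n * real n ^ 2) \<le> pmf (random_square n) (Some s)"
proof -
  obtain x i j where s_eq: "s = (x, i, j)" and x: "x \<subseteq> {..<n}"
    and ij: "(i, j) \<in> ordered_pairs ({..<n} - x)"
    using s by (auto simp: squares_def)
  define P where "P = ordered_pairs ({..<n} - x)"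
  have finP: "finite P" unfolding P_def by (simp add: finite_ordered_pairs)
  have "{i, j} \<subseteq> {..<n} - x" "i \<noteq> j" using ij by (auto simp: ordered_pairs_def)
  then have two: "2 \<le> card ({..<n} - x)"
    by (metis card_2_iff card_mono finite_Diff finite_lessThan)
  have cardP: "0 < card P" "card P \<le> n ^ 2"
  proof -
    show "0 < card P" using ij finP by (auto simp: P_def card_gt_0_iff)
    have "card P \<le> card ({..<n} \<times> {..<n})"
      by (rule card_mono) (auto simp: P_def ordered_pairs_def)
    then show "card P \<le> n ^ 2" by (simp add: power2_eq_square)
  qed
  have n0: "0 < n" using cardP by (cases n) auto
  define F where "F = (\<lambda>y. if 2 \<le> card ({..<n} - y)
       then map_pmf (\<lambda>(i, j). Some (y, i, j)) (pmf_of_set (ordered_pairs ({..<n} - y)))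
       else return_pmf None)"
  have "pmf (F x) (Some (x, i, j)) = pmf (pmf_of_set P) (i, j)"
    using two pmf_map_inj'[of "\<lambda>(i, j). Some (x, i, j)" "pmf_of_set P" "(i, j)"]
    by (simp add: F_def P_def inj_def)
  also have "\<dots> = 1 / card P"
    using ij finP by (subst pmf_of_set) (auto simp: P_def)
  finally have Fx: "pmf (F x) (Some (x, i, j)) = 1 / card P" .
  have "pmf (random_square n) (Some s) = (\<Sum>y\<in>Pow {..<n}. pmf (F y) (Some s)) / 2 ^ n"
    unfolding random_square_ordered_pairs F_def[symmetric] pmf_bind
    by (simp add: integral_pmf_of_set Pow_not_empty card_Pow)
  also have "\<dots> \<ge> pmf (F x) (Some s) / 2 ^ n"
    by (intro divide_right_mono member_le_sum) (use x in auto)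
  finally have "1 / (2 ^ n * card P) \<le> pmf (random_square n) (Some s)"
    using Fx s_eq by (simp add: divide_divide_eq_left mult.commute)
  moreover have "0 < real (card P)" "real (card P) \<le> real n ^ 2"
    using cardP by (simp_all flip: of_nat_power)
  then have "1 / (2 ^ n * real n ^ 2) \<le> 1 / (2 ^ n * card P)"
    by (intro divide_left_mono mult_left_mono mult_pos_pos) (use n0 in auto)
  ultimately show ?thesis by linarith
qed

definition violation_prob :: "nat \<Rightarrow> (nat set \<Rightarrow> real) \<Rightarrow> real" where
  "violation_prob n f = measure_pmf.prob (random_square n) {s. square_violated f s}"

lemma tester_rejects_prob_eq: "tester_rejects_prob n m f = 1 - (1 - violation_prob n f) ^ m"
proof -
  have "{s. \<exists>k<m. square_violated f (s k)} = UNIV - Pi {..<m} (\<lambda>_. UNIV - {s. square_violated f s})"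
    by auto
  then have "tester_rejects_prob n m f = 1 - measure_pmf.prob (Pi_pmf {..<m} None (\<lambda>_. random_square n))
      (Pi {..<m} (\<lambda>_. UNIV - {s. square_violated f s}))"
    unfolding tester_rejects_prob_def using measure_pmf.prob_compl by simp
  also have "\<dots> = 1 - (1 - violation_prob n f) ^ m"
    by (subst measure_Pi_pmf_Pi) (simp_all add: violation_prob_def measure_pmf.prob_compl[simplified])
  finally show ?thesis .
qed

lemma violation_prob_submodular:
  assumes "submodular n f"
  shows "violation_prob n f = 0"
proof -
  have "set_pmf (random_square n) \<inter> {s. square_violated f s} = {}"
    using set_pmf_random_square violated_squares_submodular[OF assms]
    by (fastforce simp: violated_squares_def)
  then show ?thesis unfolding violation_prob_def by (simp add: measure_pmf_zero_iff)
qed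

lemma violation_prob_ge: "card (violated_squares n f) / (2 ^ n * real n ^ 2) \<le> violation_prob n f"
proof -
  have "card (violated_squares n f) / (2 ^ n * real n ^ 2)
      = (\<Sum>s \<in> violated_squares n f. 1 / (2 ^ n * real n ^ 2))"
    by simp
  also have "\<dots> \<le> (\<Sum>s \<in> violated_squares n f. pmf (random_square n) (Some s))"
    by (intro sum_mono pmf_random_square_ge) (simp add: violated_squares_def)
  also have "\<dots> = measure_pmf.prob (random_square n) (Some ` violated_squares n f)"
    by (simp add: measure_measure_pmf_finite finite_violated_squares sum.reindex)
  also have "\<dots> \<le> violation_prob n f"
    unfolding violation_prob_def
    by (intro measure_pmf.finite_measure_mono) (auto simp: violated_squares_def)
  finally show ?thesis .
qed

section \<open>Binomial estimates\<close>

lemma card_subsets_far_from_middle: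
  assumes n: "n > 0" and t: "t \<ge> 0"
  shows "real (card {z \<in> Pow {..<n}. t \<le> \<bar>real (card z) - real n / 2\<bar>}) \<le> 2 ^ n * (2 * exp (- 2 * t^2 / n))"
proof -
  interpret binomial_distribution n "1/2" by unfold_locales auto
  define S where "S = {k. k \<le> n \<and> t \<le> \<bar>real k - real n / 2\<bar>}"
  have "measure_pmf.prob (binomial_pmf n (1/2)) {k. t \<le> \<bar>real k - real n * (1/2)\<bar>}
      = measure_pmf.prob (binomial_pmf n (1/2)) S"
    by (intro measure_prob_cong_0) (auto simp: S_def)
  also have "\<dots> = (\<Sum>k\<in>S. pmf (binomial_pmf n (1/2)) k)"
    by (rule measure_measure_pmf_finite) (simp add: S_def)
  also have "\<dots> = (\<Sum>k\<in>S. real (n choose k) / 2 ^ n)"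
  proof (intro sum.cong refl)
    fix k assume "k \<in> S"
    then have "(1/2::real) ^ k * (1 - 1/2) ^ (n - k) = 1 / 2 ^ n"
      by (simp add: S_def power_add[symmetric] power_divide)
    then show "pmf (binomial_pmf n (1/2)) k = real (n choose k) / 2 ^ n"
      by (simp only: pmf_binomial mult.assoc) simp
  qed
  also have "\<dots> = real (\<Sum>k\<in>S. n choose k) / 2 ^ n"
    by (simp add: sum_divide_distrib)
  also have "(\<Sum>k\<in>S. n choose k) = card {z \<in> Pow {..<n}. t \<le> \<bar>real (card z) - real n / 2\<bar>}"
    unfolding S_def by (rule card_subsets_card[symmetric])
  finally have "real (card {z \<in> Pow {..<n}. t \<le> \<bar>real (card z) - real n / 2\<bar>}) / 2 ^ n
      \<le> 2 * exp (- 2 * t^2 / n)"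
    using prob_abs_ge[OF n t] by linarith
  then show ?thesis by (simp add: pos_divide_le_eq mult.commute)
qed

lemma four_le_exp_2: "4 \<le> exp (2::real)"
proof -
  have "(2::real) ^ 2 \<le> exp 1 ^ 2"
    using exp_ge_add_one_self[of 1] by (intro power_mono) simp_all
  then show ?thesis by (simp flip: exp_of_nat_mult)
qed

text \<open>By Hoeffding's bound with t = \<surd>n, half of the cube lies on the at most 3 \<surd>n levels
  within distance \<surd>n of n/2, and no level is larger than the middle one.\<close>

lemma central_binomial_ge:
  assumes n: "n \<ge> 1"
  shows "2 ^ n / (6 * sqrt n) \<le> real (n choose (n div 2))"
proof -
  define t where "t = sqrt (real n)"
  have t1: "t \<ge> 1" using n by (simp add: t_def)
  define lo where "lo = nat \<lceil>real n / 2 - t\<rceil>"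
  define hi where "hi = nat \<lfloor>real n / 2 + t\<rfloor>"
  have "exp (- 2 * t^2 / n) = 1 / exp 2" using n by (simp add: t_def exp_minus inverse_eq_divide)
  also have "\<dots> \<le> 1 / 4" using four_le_exp_2 by (simp add: field_simps)
  finally have "(2::real) ^ n * (2 * exp (- 2 * t^2 / n)) \<le> 2 ^ n / 2" by simp
  then have "real (card {z \<in> Pow {..<n}. t \<le> \<bar>real (card z) - real n / 2\<bar>}) \<le> 2 ^ n / 2"
    using card_subsets_far_from_middle[of n t] n t1 by linarith
  then have "2 ^ n / 2 \<le> real (card {z \<in> Pow {..<n}. \<not> t \<le> \<bar>real (card z) - real n / 2\<bar>})"
    using card_subsets_not[where n = n and P = "\<lambda>z. t \<le> \<bar>real (card z) - real n / 2\<bar>"] by linarith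
  also have "card {z \<in> Pow {..<n}. \<not> t \<le> \<bar>real (card z) - real n / 2\<bar>}
      = (\<Sum>k | k \<le> n \<and> \<not> t \<le> \<bar>real k - real n / 2\<bar>. n choose k)"
    by (rule card_subsets_card)
  also have "\<dots> \<le> (\<Sum>k\<in>{lo..hi}. n choose k)"
    by (rule sum_mono2) (auto simp: lo_def hi_def nat_le_iff le_nat_iff ceiling_le_iff le_floor_iff)
  also have "\<dots> \<le> card {lo..hi} * (n choose (n div 2))"
    using sum_bounded_above[of "{lo..hi}" "\<lambda>k. n choose k"] binomial_maximum by simp
  finally have "2 ^ n / 2 \<le> real (card {lo..hi}) * real (n choose (n div 2))"
    by (simp flip: of_nat_mult)
  also have "real (card {lo..hi}) \<le> 3 * t"
  proof (cases "lo \<le> hi")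
    case True
    have "real hi \<le> real n / 2 + t" "real n / 2 - t \<le> real lo"
      using t1 unfolding lo_def hi_def by linarith+
    with True t1 show ?thesis by (simp add: of_nat_diff)
  qed (use t1 in simp)
  finally show ?thesis
    using t1 by (simp add: t_def field_simps mult_right_mono)
qed

text \<open>Each step away from the centre c multiplies the binomial coefficient by
  (n - c - j) / (c + j + 1) \<ge> 1 - 2 (2 j + 1) / n.\<close>

lemma binomial_near_centre_ge:
  assumes n: "n > 0" and cj: "n div 2 + j \<le> n"
  shows "real (n choose (n div 2)) * (1 - 2 * real j ^ 2 / n) \<le> real (n choose (n div 2 + j))"
  using cj
proof (induction j)
  case (Suc j)
  define c where "c = n div 2"
  define B where "B = real (n choose c)"
  define r where "r = real (n choose (c + j))"
  define r' where "r' = real (n choose (c + Suc j))"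
  define x where "x = 2 * (2 * real j + 1) / n"
  have ih: "B * (1 - 2 * real j ^ 2 / n) \<le> r" using Suc by (simp add: r_def B_def c_def)
  have rB: "r \<le> B" "0 \<le> r" "0 \<le> x" using binomial_maximum by (simp_all add: r_def B_def c_def x_def)
  have "(c + j + 1) * (n choose (c + j + 1)) = (n - (c + j)) * (n choose (c + j))"
    using times_binomial_minus1_eq[of "c + j + 1" n] binomial_absorb_comp[of n "c + j"] by simp
  then have "real ((c + j + 1) * (n choose (c + j + 1))) = real ((n - (c + j)) * (n choose (c + j)))"
    by (rule arg_cong)
  then have step: "real (c + j + 1) * r' = real (n - (c + j)) * r"
    unfolding r_def r'_def by (simp only: of_nat_mult add_Suc_right Suc_eq_plus1 add.assoc)
  have cn: "real n - 1 \<le> 2 * real c" "2 * real c \<le> real n" "c + j < n"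
    using Suc.prems unfolding c_def by linarith+
  have "(2 * real j + 1) * real n \<le> (2 * real j + 1) * (2 * real (c + j + 1))"
    using cn by (intro mult_left_mono) auto
  then have "2 * real j + 1 \<le> real (c + j + 1) * x"
    using n by (simp add: x_def field_simps)
  then have "real (c + j + 1) * (1 - x) \<le> real (n - (c + j))"
    using cn by (simp add: of_nat_diff algebra_simps)
  then have "real (c + j + 1) * (1 - x) * r \<le> real (n - (c + j)) * r"
    using rB(2) by (rule mult_right_mono)
  then have "real (c + j + 1) * ((1 - x) * r) \<le> real (c + j + 1) * r'"
    using step by (simp add: mult.assoc)
  then have "(1 - x) * r \<le> r'" by (simp add: mult_le_cancel_left)
  moreover have "x * r \<le> x * B" using rB by (simp add: mult_left_mono)
  moreover have "B * (1 - 2 * real j ^ 2 / n) - x * B = B * (1 - 2 * real (Suc j) ^ 2 / n)"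
    using n by (simp add: x_def field_simps power2_eq_square)
  ultimately show ?case using ih by (simp add: r'_def B_def c_def algebra_simps)
qed simp

lemma card_subsets_central_band_ge:
  assumes n: "n > 0" and J: "4 * J ^ 2 \<le> n"
  shows "real (J + 1) * real (n choose (n div 2)) / 2
           \<le> real (card {z \<in> Pow {..<n}. n div 2 \<le> card z \<and> card z \<le> n div 2 + J})"
proof -
  define c where "c = n div 2"
  have "J \<le> J ^ 2" by (simp add: power2_eq_square le_square)
  then have cJ: "c + J \<le> n" using J by (simp add: c_def)
  have "real (n choose c) / 2 \<le> real (n choose k)" if "k \<in> {c..c + J}" for k
  proof -
    have "4 * real (k - c) ^ 2 \<le> 4 * real J ^ 2" using that by (simp add: power_mono)
    also have "\<dots> \<le> real n" using J by (simp flip: of_nat_power)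
    finally have "real (n choose c) * (4 * real (k - c) ^ 2) \<le> real (n choose c) * real n"
      by (intro mult_left_mono) simp_all
    then have "real (n choose c) / 2 \<le> real (n choose c) * (1 - 2 * real (k - c) ^ 2 / n)"
      using n by (simp add: field_simps mult.commute)
    also have "\<dots> \<le> real (n choose k)"
      using binomial_near_centre_ge[OF n, of "k - c"] that cJ by (simp add: c_def)
    finally show ?thesis .
  qed
  then have "(\<Sum>k\<in>{c..c + J}. real (n choose c) / 2) \<le> (\<Sum>k\<in>{c..c + J}. real (n choose k))"
    by (rule sum_mono)
  also have "\<dots> = real (card {z \<in> Pow {..<n}. c \<le> card z \<and> card z \<le> c + J})"
  proof -
    have "{k. k \<le> n \<and> c \<le> k \<and> k \<le> c + J} = {c..c + J}" using cJ by auto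
    then show ?thesis
      using card_subsets_card[where n = n and P = "\<lambda>k. c \<le> k \<and> k \<le> c + J"] by simp
  qed
  finally show ?thesis by (simp add: c_def)
qed

section \<open>The sample size\<close>

lemma violation_prob_amplified:
  assumes far: "eps_far_submodular n \<epsilon> f" and n: "n \<ge> 1" and D: "0 < D"
    and out: "real (card {z \<in> Pow {..<n}. card z < a \<or> b < card z}) \<le> (\<epsilon> - D) * 2 ^ n"
    and R: "2 * real n ^ 2 * (real n + 1) ^ (b - a) \<le> D * R"
  shows "2 \<le> violation_prob n f * R"
proof -
  define p where "p = violation_prob n f"
  define E where "E = (real n + 1) ^ (b - a)"
  have p0: "0 \<le> p" by (simp add: p_def violation_prob_def)
  have "real (card (violated_squares n f)) \<le> p * (2 ^ n * real n ^ 2)"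
    using violation_prob_ge[of n f] n by (simp add: p_def pos_divide_le_eq)
  then have "real (card (violated_squares n f)) * E \<le> p * (2 ^ n * real n ^ 2) * E"
    by (rule mult_right_mono) (simp add: E_def)
  then have "\<epsilon> * 2 ^ n < (\<epsilon> - D) * 2 ^ n + p * (2 ^ n * real n ^ 2) * E"
    using eps_far_card_bound[OF far, of a b] out unfolding E_def by linarith
  then have "D < p * real n ^ 2 * E"
    by (simp add: algebra_simps)
  then have "2 * D < p * (2 * real n ^ 2 * E)" by (simp add: algebra_simps)
  also have "\<dots> \<le> p * (D * R)" using R p0 by (simp add: E_def mult_left_mono)
  finally show ?thesis using D by (simp add: p_def algebra_simps)
qed

lemma ln_Suc_le:
  assumes n: "2 \<le> n"
  shows "ln (real n + 1) \<le> 2 * ln (real n)"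
proof -
  have "2 * real n \<le> real n * real n" using n by (intro mult_right_mono) auto
  moreover have "2 \<le> real n" using n by simp
  ultimately have "real n + 1 \<le> real n ^ 2" unfolding power2_eq_square by linarith
  then have "ln (real n + 1) \<le> ln (real n ^ 2)" using n by (intro ln_mono) auto
  then show ?thesis using n by (simp add: ln_realpow)
qed

lemma half_le_ln:
  assumes "2 \<le> n"
  shows "1 / 2 \<le> ln (real n)"
proof -
  have "ln 2 \<le> ln (real n)" using assms by simp
  then show ?thesis using ln2_ge_two_thirds by linarith
qed

text \<open>The sample size (1/\<epsilon>)^(C \<surd>n ln n) dominates the losses n^2 (n + 1)^w and 1/\<epsilon> of the
  counting argument once w = O(\<surd>(n ln (1/\<epsilon>))) and ln (1/\<epsilon>) is bounded below.\<close>

lemma sample_size_bound_moderate: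
  assumes n: "2 \<le> n" and \<epsilon>: "0 < \<epsilon>" "\<epsilon> \<le> 95/96"
    and w: "real w \<le> 2 * sqrt (real n * ln (4 / \<epsilon>) / 2)"
  shows "4 * real n ^ 2 * (real n + 1) ^ w \<le> \<epsilon> * (1 / \<epsilon>) powr (2000 * sqrt n * ln n)"
proof -
  define L where "L = ln (1 / \<epsilon>)"
  define S where "S = sqrt n * ln n"
  have L: "1 / 96 \<le> L"
    using ln_le_minus_one[of \<epsilon>] \<epsilon> by (simp add: L_def ln_div)
  have lnn: "1 / 2 \<le> ln n" using n by (rule half_le_ln)
  have sqn: "1 \<le> sqrt n" using n by simp
  have S: "ln n \<le> S" using mult_right_mono[OF sqn] lnn by (simp add: S_def)
  have ln4: "ln 4 = 2 * ln (2::real)"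
    using ln_realpow[of 2 2] by simp
  then have "ln (4 / \<epsilon>) = 2 * ln 2 + L"
    using \<epsilon> by (simp add: L_def ln_div)
  then have "ln (4 / \<epsilon>) / 2 \<le> 193 * L" using ln_2_less_1 L by linarith
  also have "\<dots> \<le> (193 * L) ^ 2"
    using mult_left_mono[of 1 "193 * L" "193 * L"] L by (simp add: power2_eq_square)
  finally have "real n * (ln (4 / \<epsilon>) / 2) \<le> real n * (193 * L) ^ 2"
    by (rule mult_left_mono) simp
  then have "sqrt (real n * ln (4 / \<epsilon>) / 2) \<le> sqrt n * (193 * L)"
    using L by (intro real_le_lsqrt) (simp_all add: power_mult_distrib)
  then have "real w * ln (real n + 1) \<le> (2 * (sqrt n * (193 * L))) * (2 * ln n)"
    using w ln_Suc_le[OF n] L by (intro mult_mono) auto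
  also have "\<dots> = 772 * (L * S)" by (simp add: S_def)
  finally have wL: "real w * ln (real n + 1) \<le> 772 * (L * S)" .
  have "L * (1 / 2) \<le> L * S" "L * ln n \<le> L * S" "(1 / 96) * ln n \<le> L * ln n"
    using mult_left_mono[of "1/2" S L] mult_left_mono[OF S, of L] mult_right_mono[OF L, of "ln n"] lnn S L
    by auto
  then have "ln 4 + 2 * ln n + real w * ln (real n + 1) \<le> - L + 2000 * (L * S)"
    using wL L ln_2_less_1 ln4 by linarith
  then have "ln (4 * real n ^ 2 * (real n + 1) ^ w) \<le> ln (\<epsilon> * (1 / \<epsilon>) powr (2000 * sqrt n * ln n))"
    using n \<epsilon> by (simp add: ln_mult ln_realpow ln_div L_def S_def algebra_simps)
  then show ?thesis using n \<epsilon> by simp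
qed

lemma sample_size_bound_near_1:
  assumes n: "2 \<le> n" and \<delta>: "0 < \<delta>" "\<delta> < 1" "1 < 6 * \<delta> * sqrt n"
    and J: "real J \<le> 24 * \<delta> * sqrt n + 1"
  shows "2 * real n ^ 2 * (real n + 1) ^ J \<le> \<delta> * (1 / (1 - \<delta>)) powr (2000 * sqrt n * ln n)"
proof -
  define L where "L = ln (1 / (1 - \<delta>))"
  define S where "S = sqrt n * ln n"
  have L: "\<delta> \<le> L"
    using ln_add_one_self_le_self2[of "- \<delta>"] \<delta> by (simp add: L_def ln_div)
  have lnn: "1 / 2 \<le> ln n" using n by (rule half_le_ln)
  have "real n \<le> real n ^ 2" by (simp add: power2_eq_square le_square flip: of_nat_mult)
  then have sqn: "sqrt n \<le> n" by (intro real_le_lsqrt) simp_all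
  have "\<delta> * (6 * sqrt n) \<le> \<delta> * (6 * real n)"
    using sqn \<delta> by (intro mult_left_mono) simp_all
  then have "1 / (6 * real n) \<le> \<delta>"
    using \<delta>(3) n by (simp add: field_simps)
  then have ln\<delta>: "- (ln 6 + ln n) \<le> ln \<delta>"
    using n \<delta> ln_le_cancel_iff[of "1 / (6 * real n)" \<delta>] by (simp add: ln_div ln_mult)
  have \<delta>S: "ln n / 6 \<le> \<delta> * S"
    using mult_right_mono[OF less_imp_le[OF \<delta>(3)], of "ln n"] lnn by (simp add: S_def mult_ac)
  have "real J * ln (real n + 1) \<le> (24 * \<delta> * sqrt n + 1) * (2 * ln n)"
    using J ln_Suc_le[OF n] by (intro mult_mono) auto
  also have "\<dots> = 48 * (\<delta> * S) + 2 * ln n" by (simp add: S_def algebra_simps)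
  finally have JL: "real J * ln (real n + 1) \<le> 48 * (\<delta> * S) + 2 * ln n" .
  have "0 \<le> S" using lnn by (simp add: S_def)
  with L have "\<delta> * S \<le> L * S" by (rule mult_right_mono)
  then have "ln 2 + 2 * ln n + real J * ln (real n + 1) \<le> ln \<delta> + 2000 * (L * S)"
    using JL ln\<delta> \<delta>S lnn ln_2_less_1 ln_le_minus_one[of 6] by linarith
  then have "ln (2 * real n ^ 2 * (real n + 1) ^ J) \<le> ln (\<delta> * (1 / (1 - \<delta>)) powr (2000 * sqrt n * ln n))"
    using n \<delta> by (simp add: ln_mult ln_realpow L_def S_def algebra_simps)
  then show ?thesis using n \<delta> by simp
qed

text \<open>For \<epsilon> bounded away from 1, Hoeffding's bound leaves at most half of the \<epsilon>-fraction
  outside the levels n/2 \<plusminus> t, t = \<surd>(n ln (4/\<epsilon>) / 2).\<close>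

lemma violation_prob_sample_size_moderate:
  assumes far: "eps_far_submodular n \<epsilon> f" and n: "2 \<le> n" and \<epsilon>: "0 < \<epsilon>" "\<epsilon> \<le> 95/96"
  shows "2 \<le> violation_prob n f * (1 / \<epsilon>) powr (2000 * sqrt n * ln n)"
proof -
  define t where "t = sqrt (real n * ln (4 / \<epsilon>) / 2)"
  define a where "a = nat \<lceil>real n / 2 - t\<rceil>"
  define b where "b = nat \<lfloor>real n / 2 + t\<rfloor>"
  have t0: "0 \<le> t" using \<epsilon> by (simp add: t_def)
  have "t \<le> \<bar>real k - real n / 2\<bar>" if "k < a \<or> b < k" for k
  proof -
    have "real k < real n / 2 - t \<or> real n / 2 + t < real k"
      using that
    proof
      assume "k < a"
      then have "int k < \<lceil>real n / 2 - t\<rceil>" unfolding a_def by linarith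
      then show ?thesis by (simp add: less_ceiling_iff)
    next
      assume "b < k"
      then have "\<lfloor>real n / 2 + t\<rfloor> < int k" unfolding b_def using t0 by linarith
      then show ?thesis by (simp add: floor_less_iff)
    qed
    then show ?thesis by linarith
  qed
  then have "{z \<in> Pow {..<n}. card z < a \<or> b < card z} \<subseteq> {z \<in> Pow {..<n}. t \<le> \<bar>real (card z) - real n / 2\<bar>}"
    by blast
  then have "real (card {z \<in> Pow {..<n}. card z < a \<or> b < card z})
      \<le> real (card {z \<in> Pow {..<n}. t \<le> \<bar>real (card z) - real n / 2\<bar>})"
    by (intro of_nat_mono card_mono) auto
  also have "\<dots> \<le> 2 ^ n * (2 * exp (- 2 * t^2 / n))"
    using n t0 by (intro card_subsets_far_from_middle) auto
  also have "exp (- 2 * t^2 / n) = \<epsilon> / 4"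
    using n \<epsilon> by (simp add: t_def ln_div exp_diff)
  finally have out: "real (card {z \<in> Pow {..<n}. card z < a \<or> b < card z}) \<le> (\<epsilon> - \<epsilon> / 2) * 2 ^ n"
    by (simp add: mult.commute)
  have "real (b - a) \<le> 2 * t"
    using t0 by (simp add: a_def b_def of_nat_diff) linarith
  then have "4 * real n ^ 2 * (real n + 1) ^ (b - a) \<le> \<epsilon> * (1 / \<epsilon>) powr (2000 * sqrt n * ln n)"
    using n \<epsilon> by (intro sample_size_bound_moderate) (simp_all add: t_def)
  then show ?thesis
    using n \<epsilon> by (intro violation_prob_amplified[OF far _ _ out]) simp_all
qed

text \<open>For \<epsilon> close to 1 the Hoeffding band is too wide. Instead, \<delta> = 1 - \<epsilon> is at least of
  order 1/\<surd>n (otherwise f could be repaired outside the middle level alone), and a band of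
  width J \<approx> 24 \<delta> \<surd>n above the middle level already carries twice the mass \<delta> 2^n.\<close>

lemma eps_far_gap:
  assumes far: "eps_far_submodular n \<epsilon> f" and n: "1 \<le> n"
  shows "1 < 6 * (1 - \<epsilon>) * sqrt n"
proof -
  have "2 ^ n / (6 * sqrt n) \<le> real (n choose (n div 2))"
    using n by (rule central_binomial_ge)
  also have "\<dots> < (1 - \<epsilon>) * 2 ^ n"
    using eps_far_level_bound[OF far, of "n div 2"] by (simp add: algebra_simps)
  finally have "2 ^ n * 1 < 2 ^ n * (6 * (1 - \<epsilon>) * sqrt n)"
    using n by (simp add: field_simps)
  then show ?thesis by (rule mult_left_less_imp_less) simp
qed

lemma violation_prob_sample_size_near_1:
  assumes far: "eps_far_submodular n \<epsilon> f" and n: "2 \<le> n" and \<epsilon>: "95/96 < \<epsilon>"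
  shows "2 \<le> violation_prob n f * (1 / \<epsilon>) powr (2000 * sqrt n * ln n)"
proof -
  define \<delta> where "\<delta> = 1 - \<epsilon>"
  define c where "c = n div 2"
  define N :: real where "N = 2 ^ n"
  have sqn: "1 \<le> sqrt n" using n by simp
  have \<delta>6: "1 < 6 * \<delta> * sqrt n"
    using eps_far_gap[OF far] n by (simp add: \<delta>_def)
  then have "0 < 6 * \<delta> * sqrt n" by linarith
  then have \<delta>: "0 < \<delta>" "\<delta> < 1 / 96"
    using sqn \<epsilon> by (simp_all add: \<delta>_def zero_less_mult_iff)
  have "N / (6 * sqrt n) \<le> real (n choose c)"
    using n central_binomial_ge[of n] by (simp add: N_def c_def)
  define J where "J = nat \<lceil>24 * \<delta> * sqrt n\<rceil>"
  have J: "24 * \<delta> * sqrt n \<le> real J" "real J \<le> 24 * \<delta> * sqrt n + 1"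
    using \<delta> sqn by (simp_all add: J_def)
  have "4 * real J ^ 2 \<le> real n"
  proof -
    have "\<delta> * sqrt n \<le> (1 / 96) * sqrt n"
      using \<delta> sqn by (intro mult_right_mono) simp_all
    then have "real J \<le> sqrt n / 2" using J \<delta>6 by linarith
    then have "real J ^ 2 \<le> (sqrt n / 2) ^ 2" by (intro power_mono) auto
    then show ?thesis by (simp add: power_divide)
  qed
  then have "4 * J ^ 2 \<le> n" by (simp flip: of_nat_power)
  then have "real (J + 1) * real (n choose c) / 2
      \<le> real (card {z \<in> Pow {..<n}. c \<le> card z \<and> card z \<le> c + J})"
    unfolding c_def by (intro card_subsets_central_band_ge) (use n in auto)
  moreover have "2 * \<delta> * N \<le> real (J + 1) * real (n choose c) / 2"
  proof -
    have "(24 * \<delta> * sqrt n) * (N / (6 * sqrt n)) \<le> real (J + 1) * real (n choose c)"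
      using J \<delta> \<open>N / (6 * sqrt n) \<le> real (n choose c)\<close> by (intro mult_mono) (auto simp: N_def)
    then show ?thesis using sqn by (simp add: field_simps)
  qed
  moreover have "{z \<in> Pow {..<n}. card z < c \<or> c + J < card z}
      = {z \<in> Pow {..<n}. \<not> (c \<le> card z \<and> card z \<le> c + J)}" by auto
  ultimately have out: "real (card {z \<in> Pow {..<n}. card z < c \<or> c + J < card z}) \<le> (\<epsilon> - \<delta>) * N"
    using card_subsets_not[where n = n and P = "\<lambda>z. c \<le> card z \<and> card z \<le> c + J"]
    by (simp add: \<delta>_def N_def algebra_simps)
  have "2 * real n ^ 2 * (real n + 1) ^ (c + J - c) \<le> \<delta> * (1 / \<epsilon>) powr (2000 * sqrt n * ln n)"
    using sample_size_bound_near_1[OF n _ _ \<delta>6 J(2)] \<delta> by (simp add: \<delta>_def)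
  then show ?thesis
    using n \<delta> by (intro violation_prob_amplified[OF far _ _ out[unfolded N_def]]) simp_all
qed

lemma violation_prob_sample_size:
  assumes far: "eps_far_submodular n \<epsilon> f" and \<epsilon>: "0 < \<epsilon>"
  shows "2 \<le> violation_prob n f * (1 / \<epsilon>) powr (2000 * sqrt n * ln n)"
proof -
  have "2 \<le> n"
  proof (rule ccontr)
    assume "\<not> 2 \<le> n"
    then have "submodular n f" by (intro submodular_le_1) simp
    with far have "\<epsilon> * 2 ^ n < 0" unfolding eps_far_submodular_def by fastforce
    with \<epsilon> show False by (simp add: mult_less_0_iff)
  qed
  then show ?thesis
    using far \<epsilon> violation_prob_sample_size_moderate violation_prob_sample_size_near_1
    by (cases "\<epsilon> \<le> 95/96") auto
qed

lemma one_minus_power_gt: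
  fixes p :: real
  assumes "0 \<le> p" "p \<le> 1" "2 \<le> p * m"
  shows "2 / 3 < 1 - (1 - p) ^ m"
proof -
  have "(1 - p) ^ m \<le> exp (- p) ^ m"
    using assms exp_ge_add_one_self[of "- p"] by (intro power_mono) auto
  also have "\<dots> = exp (- (p * m))" by (simp flip: exp_of_nat_mult)
  also have "\<dots> \<le> exp (- 2)" using assms(3) by simp
  also have "\<dots> \<le> 1 / 4" using four_le_exp_2 by (simp add: exp_minus field_simps)
  finally show ?thesis by simp
qed

theorem corollary1:
  "\<exists>C>0. \<forall>n::nat. \<forall>\<epsilon>::real. \<forall>f::nat set \<Rightarrow> real. 0 < \<epsilon> \<longrightarrow>
     (let m = nat \<lceil>(1 / \<epsilon>) powr (C * sqrt (real n) * ln (real n))\<rceil> in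
        (submodular n f \<longrightarrow> tester_rejects_prob n m f = 0) \<and>
        (eps_far_submodular n \<epsilon> f \<longrightarrow> tester_rejects_prob n m f > 2 / 3))"
proof (intro exI[of _ 2000] conjI allI impI)
  fix n :: nat and \<epsilon> :: real and f :: "nat set \<Rightarrow> real"
  assume \<epsilon>: "0 < \<epsilon>"
  define R where "R = (1 / \<epsilon>) powr (2000 * sqrt (real n) * ln (real n))"
  define m where "m = nat \<lceil>R\<rceil>"
  define p where "p = violation_prob n f"
  have p: "0 \<le> p" "p \<le> 1" by (simp_all add: p_def violation_prob_def)
  have "submodular n f \<longrightarrow> tester_rejects_prob n m f = 0"
    by (simp add: tester_rejects_prob_eq violation_prob_submodular)
  moreover have "eps_far_submodular n \<epsilon> f \<longrightarrow> 2 / 3 < tester_rejects_prob n m f"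
  proof
    assume "eps_far_submodular n \<epsilon> f"
    then have "2 \<le> p * R" unfolding p_def R_def using \<epsilon> by (rule violation_prob_sample_size)
    also have "\<dots> \<le> p * m" using p by (intro mult_left_mono) (simp_all add: m_def, linarith)
    finally show "2 / 3 < tester_rejects_prob n m f"
      using p one_minus_power_gt by (simp add: tester_rejects_prob_eq p_def)
  qed
  ultimately show "let m = nat \<lceil>(1 / \<epsilon>) powr (2000 * sqrt (real n) * ln (real n))\<rceil> in
      (submodular n f \<longrightarrow> tester_rejects_prob n m f = 0) \<and>
      (eps_far_submodular n \<epsilon> f \<longrightarrow> 2 / 3 < tester_rejects_prob n m f)"
    by (simp add: m_def R_def)
qed simp

end
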